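(* Fix $k\in\mathbb N$. Let $g:\Omega\times\mathbb R\to\mathbb R$ be measurable and suppose there is $C\in L^2(\Omega)$ (resp. $C\in L^\infty(\Omega)$) with $$|g(\omega,z)|\mathbf 1_{|z|\le1}\le C(\omega)|z|,\qquad |g(\omega,z)+g(\omega,-z)|\mathbf 1_{|z|\le1}\le C(\omega)|z|^2 .$$ Then the limit $\lim_{\alpha\downarrow0}\int_{\alpha<|z|\le1}g(\omega,z)D^kc(\omega,z)\chi(dz)$ exists in $L^2(\Omega)$ (resp. in $L^\infty(\Omega)$), where $D^0c=c$.
   Context: $(\Omega,\mathcal G,\mu)$ is a probability space with an ergodic, jointly measurable group $\{\tau_x\}_{x\in\mathbb R}$ of measure-preserving maps; $T_xf(\omega)=f(\tau_x\omega)$ is a strongly continuous unitary group on $L^2(\Omega)$ with generator $D$ ($Df=\lim_{h\to0}h^{-1}(T_hf-f)$ in $L^2$), $D^k$ its iterates; $C^\infty(\Omega)$ is the set of $f$ in the domains of all $D^k$ with $|D^kf|_\infty<\infty$. $\chi$ is a symmetric Lévy measure on $\mathbb R$ ($\chi(dz)=\chi(-dz)$, $\int\min(1,z^2)\chi(dz)<\infty$). $c:\Omega\times\mathbb R\to[0,\infty)$ is bounded measurable with $c(\tau_z\omega,-z)=c(\omega,z)$ for $\mu$-a.e. $\omega$, $\chi$-a.e. $z$, and for $\chi$-a.e. $z$, $c(\cdot,z)\in C^\infty(\Omega)$ with $|D^kc(\cdot,z)|_\infty\le C_k$ for constants $C_k$ independent of $z$. *)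

theory Defs
  imports "HOL-Probability.Probability"
begin

definition ergodic_flow :: "'a measure \<Rightarrow> (real \<Rightarrow> 'a \<Rightarrow> 'a) \<Rightarrow> bool" where
  "ergodic_flow M \<tau> \<longleftrightarrow>
     (\<lambda>(x, \<omega>). \<tau> x \<omega>) \<in> measurable (borel \<Otimes>\<^sub>M M) M \<and>
     (\<forall>\<omega>\<in>space M. \<tau> 0 \<omega> = \<omega>) \<and>
     (\<forall>x y. \<forall>\<omega>\<in>space M. \<tau> (x + y) \<omega> = \<tau> x (\<tau> y \<omega>)) \<and>
     (\<forall>x. \<tau> x \<in> measurable M M \<and> distr M M (\<tau> x) = M) \<and>
     (\<forall>A\<in>sets M. (\<forall>x. \<tau> x -` A \<inter> space M = A) \<longrightarrow>
          emeasure M A = 0 \<or> emeasure M A = 1)"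

definition L2 :: "'a measure \<Rightarrow> ('a \<Rightarrow> real) \<Rightarrow> bool" where
  "L2 M f \<longleftrightarrow> f \<in> borel_measurable M \<and> integrable M (\<lambda>\<omega>. (f \<omega>)\<^sup>2)"

definition has_gen :: "'a measure \<Rightarrow> (real \<Rightarrow> 'a \<Rightarrow> 'a) \<Rightarrow> ('a \<Rightarrow> real) \<Rightarrow> ('a \<Rightarrow> real) \<Rightarrow> bool" where
  "has_gen M \<tau> f g \<longleftrightarrow> L2 M f \<and> L2 M g \<and>
     ((\<lambda>h. \<integral>\<omega>. ((f (\<tau> h \<omega>) - f \<omega>) / h - g \<omega>)\<^sup>2 \<partial>M) \<longlongrightarrow> 0) (at 0)"

fun is_Dpow :: "'a measure \<Rightarrow> (real \<Rightarrow> 'a \<Rightarrow> 'a) \<Rightarrow> nat \<Rightarrow> ('a \<Rightarrow> real) \<Rightarrow> ('a \<Rightarrow> real) \<Rightarrow> bool" where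
  "is_Dpow M \<tau> 0 f g \<longleftrightarrow> L2 M f \<and> L2 M g \<and> (AE \<omega> in M. g \<omega> = f \<omega>)"
| "is_Dpow M \<tau> (Suc k) f g \<longleftrightarrow> (\<exists>h. is_Dpow M \<tau> k f h \<and> has_gen M \<tau> h g)"

definition sym_levy_measure :: "real measure \<Rightarrow> bool" where
  "sym_levy_measure \<nu> \<longleftrightarrow> sets \<nu> = sets borel \<and> emeasure \<nu> {0} = 0 \<and>
     (\<integral>\<^sup>+ z. ennreal (min 1 (z\<^sup>2)) \<partial>\<nu>) < \<infinity> \<and>
     distr \<nu> borel uminus = \<nu>"

end

theory Submission
  imports Defs
begin

text \<open>Symmetrising with respect to the symmetric Levy measure replaces the integrand
  \<open>g(z) D\<^sup>kc(z)\<close> by its even part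
  \<open>((g(z) + g(-z)) D\<^sup>kc(z) + g(-z) (D\<^sup>kc(-z) - D\<^sup>kc(z))) / 2\<close>. The first summand is
  \<open>O(C z\<^sup>2)\<close> because \<open>D\<^sup>kc\<close> is bounded. For the second, the symmetry \<open>c(\<tau>\<^sub>z \<omega>, -z) = c(\<omega>, z)\<close>
  gives \<open>D\<^sup>kc(\<omega>, -z) = D\<^sup>kc(\<tau>\<^sub>-\<^sub>z \<omega>, z)\<close>, and a bounded \<open>D\<^sup>k\<^sup>+\<^sup>1c\<close> makes \<open>D\<^sup>kc\<close> Lipschitz
  along the flow, so it is \<open>O(C z\<^sup>2)\<close> as well. Hence the integral over \<open>\<alpha> < |z| \<le> 1\<close> differs from
  the symmetrised integral over \<open>|z| \<le> 1\<close> by a constant times \<open>C(\<omega>) \<integral>\<^bsub>|z|\<le>\<alpha>\<^esub> z\<^sup>2 \<chi>(dz)\<close>, which tends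
  to \<open>0\<close>; this is convergence in \<open>L\<^sup>2\<close> when \<open>C \<in> L\<^sup>2\<close> and in \<open>L\<^sup>\<infinity>\<close> when \<open>C\<close> is bounded.\<close>

section \<open>Flows and their generator\<close>

lemma ergodic_flowD:
  assumes "ergodic_flow M \<tau>"
  shows ergodic_flow_measurable: "\<tau> x \<in> measurable M M"
    and ergodic_flow_distr: "distr M M (\<tau> x) = M"
    and ergodic_flow_add: "\<omega> \<in> space M \<Longrightarrow> \<tau> (x + y) \<omega> = \<tau> x (\<tau> y \<omega>)"
    and ergodic_flow_zero: "\<omega> \<in> space M \<Longrightarrow> \<tau> 0 \<omega> = \<omega>"
  using assms unfolding ergodic_flow_def by auto

lemma ergodic_flow_commute:
  assumes "ergodic_flow M \<tau>" "\<omega> \<in> space M"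
  shows "\<tau> x (\<tau> y \<omega>) = \<tau> y (\<tau> x \<omega>)"
  using ergodic_flow_add[OF assms, of x y] ergodic_flow_add[OF assms, of y x] by (simp add: add.commute)

lemma integral_ergodic_flow_comp:
  fixes f :: "'a \<Rightarrow> real"
  assumes fl: "ergodic_flow M \<tau>" and f: "f \<in> borel_measurable M"
  shows "(\<integral>\<omega>. f (\<tau> x \<omega>) \<partial>M) = (\<integral>\<omega>. f \<omega> \<partial>M)"
  using integral_distr[OF ergodic_flow_measurable[OF fl] f] by (simp add: ergodic_flow_distr[OF fl])

lemma integrable_ergodic_flow_comp:
  fixes f :: "'a \<Rightarrow> real"
  assumes fl: "ergodic_flow M \<tau>" and f: "integrable M f"
  shows "integrable M (\<lambda>\<omega>. f (\<tau> x \<omega>))"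
  using integrable_distr_eq[OF ergodic_flow_measurable[OF fl] borel_measurable_integrable[OF f]] f
  by (simp add: ergodic_flow_distr[OF fl])

lemma AE_ergodic_flow_comp:
  assumes fl: "ergodic_flow M \<tau>" and "AE \<omega> in M. P \<omega>" "{\<omega>\<in>space M. P \<omega>} \<in> sets M"
  shows "AE \<omega> in M. P (\<tau> x \<omega>)"
proof -
  have "AE \<omega> in distr M M (\<tau> x). P \<omega>" by (subst ergodic_flow_distr[OF fl]) (rule assms(2))
  then show ?thesis using AE_distr_iff[OF ergodic_flow_measurable[OF fl] assms(3)] by simp
qed

lemma L2_add:
  assumes "L2 M f" "L2 M g"
  shows "L2 M (\<lambda>\<omega>. f \<omega> + g \<omega>)"
proof -
  have [measurable]: "f \<in> borel_measurable M" "g \<in> borel_measurable M" using assms by (auto simp: L2_def)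
  have "integrable M (\<lambda>\<omega>. (f \<omega> + g \<omega>)\<^sup>2)"
  proof (rule Bochner_Integration.integrable_bound)
    show "integrable M (\<lambda>\<omega>. 2 * (f \<omega>)\<^sup>2 + 2 * (g \<omega>)\<^sup>2)" using assms by (auto simp: L2_def)
    have "(f \<omega> + g \<omega>)\<^sup>2 \<le> 2 * (f \<omega>)\<^sup>2 + 2 * (g \<omega>)\<^sup>2" for \<omega>
      using sum_squares_ge_zero[of "f \<omega> - g \<omega>" 0] by (simp add: power2_eq_square algebra_simps)
    then show "AE \<omega> in M. norm ((f \<omega> + g \<omega>)\<^sup>2) \<le> norm (2 * (f \<omega>)\<^sup>2 + 2 * (g \<omega>)\<^sup>2)" by simp
  qed measurable
  then show ?thesis by (simp add: L2_def)
qed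

lemma L2_cmult: "L2 M f \<Longrightarrow> L2 M (\<lambda>\<omega>. a * f \<omega>)"
  unfolding L2_def by (auto simp: power_mult_distrib)

lemma L2_diff: "L2 M f \<Longrightarrow> L2 M g \<Longrightarrow> L2 M (\<lambda>\<omega>. f \<omega> - g \<omega>)"
  using L2_add[of M f "\<lambda>\<omega>. -1 * g \<omega>"] L2_cmult[of M g "-1"] by simp

lemma L2_ergodic_flow_comp:
  assumes fl: "ergodic_flow M \<tau>" and f: "L2 M f"
  shows "L2 M (\<lambda>\<omega>. f (\<tau> s \<omega>))"
  using f integrable_ergodic_flow_comp[OF fl, of "\<lambda>\<omega>. (f \<omega>)\<^sup>2"] ergodic_flow_measurable[OF fl]
  unfolding L2_def by auto

lemma L2_difference_quotient:
  assumes "ergodic_flow M \<tau>" "L2 M f" "L2 M g"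
  shows "L2 M (\<lambda>\<omega>. (f (\<tau> h \<omega>) - f \<omega>) / h - g \<omega>)"
  using L2_diff[OF L2_cmult[OF L2_diff[OF L2_ergodic_flow_comp[OF assms(1,2)] assms(2)], of "1 / h"] assms(3)]
  by simp

lemma (in finite_measure) L2_imp_integrable:
  assumes "L2 M f"
  shows "integrable M f"
proof (rule square_integrable_imp_integrable)
  show "f \<in> borel_measurable M" "integrable M (\<lambda>\<omega>. (f \<omega>)\<^sup>2)" using assms by (simp_all add: L2_def)
qed

lemma (in prob_space) integral_abs_le_sqrt_integral_square:
  assumes Y: "L2 M Y"
  shows "(\<integral>\<omega>. \<bar>Y \<omega>\<bar> \<partial>M) \<le> sqrt (\<integral>\<omega>. (Y \<omega>)\<^sup>2 \<partial>M)"
proof -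
  have [measurable]: "Y \<in> borel_measurable M" and sq: "integrable M (\<lambda>\<omega>. \<bar>Y \<omega>\<bar>\<^sup>2)"
    using Y by (auto simp: L2_def)
  have "integrable M (\<lambda>\<omega>. \<bar>Y \<omega>\<bar>)" using L2_imp_integrable[OF Y] by simp
  then have "0 \<le> (\<integral>\<omega>. \<bar>Y \<omega>\<bar>\<^sup>2 \<partial>M) - (\<integral>\<omega>. \<bar>Y \<omega>\<bar> \<partial>M)\<^sup>2"
    using variance_positive[of "\<lambda>\<omega>. \<bar>Y \<omega>\<bar>"] by (simp only: variance_eq[OF _ sq])
  then show ?thesis by (intro real_le_rsqrt) simp
qed

lemma (in finite_measure) integrable_L2_mult_bounded:
  assumes f: "L2 M f" and \<phi>: "\<phi> \<in> borel_measurable M" "\<And>\<omega>. \<bar>\<phi> \<omega>\<bar> \<le> 1"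
  shows "integrable M (\<lambda>\<omega>. f \<omega> * \<phi> \<omega>)"
proof (rule Bochner_Integration.integrable_bound)
  have [measurable]: "f \<in> borel_measurable M" using f by (simp add: L2_def)
  show "integrable M f" using f by (rule L2_imp_integrable)
  show "(\<lambda>\<omega>. f \<omega> * \<phi> \<omega>) \<in> borel_measurable M" using \<phi>(1) by measurable
  show "AE \<omega> in M. norm (f \<omega> * \<phi> \<omega>) \<le> norm (f \<omega>)"
    by (rule AE_I2) (simp add: abs_mult mult_left_le \<phi>(2))
qed

lemma has_gen_ergodic_flow_comp:
  assumes fl: "ergodic_flow M \<tau>" and hg: "has_gen M \<tau> f g"
  shows "has_gen M \<tau> (\<lambda>\<omega>. f (\<tau> s \<omega>)) (\<lambda>\<omega>. g (\<tau> s \<omega>))"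
proof -
  have L: "L2 M f" "L2 M g" using hg by (auto simp: has_gen_def)
  note [measurable] = L[unfolded L2_def, THEN conjunct1] ergodic_flow_measurable[OF fl]
  have eq: "(\<integral>\<omega>. ((f (\<tau> s (\<tau> h \<omega>)) - f (\<tau> s \<omega>)) / h - g (\<tau> s \<omega>))\<^sup>2 \<partial>M)
      = (\<integral>\<omega>. ((f (\<tau> h \<omega>) - f \<omega>) / h - g \<omega>)\<^sup>2 \<partial>M)" for h
  proof -
    have "(\<integral>\<omega>. ((f (\<tau> s (\<tau> h \<omega>)) - f (\<tau> s \<omega>)) / h - g (\<tau> s \<omega>))\<^sup>2 \<partial>M)
        = (\<integral>\<omega>. ((f (\<tau> h (\<tau> s \<omega>)) - f (\<tau> s \<omega>)) / h - g (\<tau> s \<omega>))\<^sup>2 \<partial>M)"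
      by (rule Bochner_Integration.integral_cong) (auto simp: ergodic_flow_commute[OF fl])
    also have "\<dots> = (\<integral>\<omega>. ((f (\<tau> h \<omega>) - f \<omega>) / h - g \<omega>)\<^sup>2 \<partial>M)"
      by (rule integral_ergodic_flow_comp[OF fl, where f="\<lambda>\<omega>. ((f (\<tau> h \<omega>) - f \<omega>) / h - g \<omega>)\<^sup>2"])
         measurable
    finally show ?thesis .
  qed
  show ?thesis
    using hg L2_ergodic_flow_comp[OF fl L(1)] L2_ergodic_flow_comp[OF fl L(2)] by (simp add: has_gen_def eq)
qed

lemma has_gen_unique:
  assumes fl: "ergodic_flow M \<tau>" and h1: "has_gen M \<tau> f1 g1" and h2: "has_gen M \<tau> f2 g2"
    and ae: "AE \<omega> in M. f1 \<omega> = f2 \<omega>"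
  shows "AE \<omega> in M. g1 \<omega> = g2 \<omega>"
proof -
  have L: "L2 M f1" "L2 M g1" "L2 M f2" "L2 M g2" using h1 h2 by (auto simp: has_gen_def)
  note [measurable] = L[unfolded L2_def, THEN conjunct1] ergodic_flow_measurable[OF fl]
  define E1 where "E1 h \<omega> = (f1 (\<tau> h \<omega>) - f1 \<omega>) / h - g1 \<omega>" for h \<omega>
  define E2 where "E2 h \<omega> = (f2 (\<tau> h \<omega>) - f2 \<omega>) / h - g2 \<omega>" for h \<omega>
  have LE: "L2 M (E1 h)" "L2 M (E2 h)" for h
    unfolding E1_def E2_def using L by (auto intro: L2_difference_quotient[OF fl])
  have Lg: "L2 M (\<lambda>\<omega>. g1 \<omega> - g2 \<omega>)" by (rule L2_diff[OF L(2,4)])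
  have bound: "(\<integral>\<omega>. (g1 \<omega> - g2 \<omega>)\<^sup>2 \<partial>M) \<le> 2 * (\<integral>\<omega>. (E1 h \<omega>)\<^sup>2 \<partial>M) + 2 * (\<integral>\<omega>. (E2 h \<omega>)\<^sup>2 \<partial>M)"
    for h
  proof -
    have "AE \<omega> in M. f1 (\<tau> h \<omega>) = f2 (\<tau> h \<omega>)"
      by (rule AE_ergodic_flow_comp[OF fl ae]) measurable
    with ae have "AE \<omega> in M. g1 \<omega> - g2 \<omega> = E2 h \<omega> - E1 h \<omega>"
      by eventually_elim (simp add: E1_def E2_def field_simps)
    then have "AE \<omega> in M. (g1 \<omega> - g2 \<omega>)\<^sup>2 \<le> 2 * (E1 h \<omega>)\<^sup>2 + 2 * (E2 h \<omega>)\<^sup>2"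
    proof eventually_elim
      case (elim \<omega>)
      have "0 \<le> (E1 h \<omega> + E2 h \<omega>)\<^sup>2" by simp
      then show ?case unfolding elim by (simp add: power2_eq_square algebra_simps)
    qed
    then have "(\<integral>\<omega>. (g1 \<omega> - g2 \<omega>)\<^sup>2 \<partial>M) \<le> (\<integral>\<omega>. 2 * (E1 h \<omega>)\<^sup>2 + 2 * (E2 h \<omega>)\<^sup>2 \<partial>M)"
      using Lg LE[of h] by (intro integral_mono_AE) (auto simp: L2_def)
    then show ?thesis using LE[of h] by (simp add: L2_def)
  qed
  have "((\<lambda>h. 2 * (\<integral>\<omega>. (E1 h \<omega>)\<^sup>2 \<partial>M) + 2 * (\<integral>\<omega>. (E2 h \<omega>)\<^sup>2 \<partial>M)) \<longlongrightarrow> 2 * 0 + 2 * 0) (at 0)"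
    using h1 h2 unfolding has_gen_def E1_def E2_def by (intro tendsto_intros) auto
  then have "(\<integral>\<omega>. (g1 \<omega> - g2 \<omega>)\<^sup>2 \<partial>M) \<le> 0"
    by (intro tendsto_lowerbound[where F="at 0"]) (auto intro: always_eventually bound)
  then have "(\<integral>\<omega>. (g1 \<omega> - g2 \<omega>)\<^sup>2 \<partial>M) = 0"
    by (simp add: antisym integral_nonneg_AE)
  then have "AE \<omega> in M. (g1 \<omega> - g2 \<omega>)\<^sup>2 = 0"
    using integral_nonneg_eq_0_iff_AE[of M "\<lambda>\<omega>. (g1 \<omega> - g2 \<omega>)\<^sup>2"] Lg by (simp add: L2_def)
  then show ?thesis by eventually_elim simp
qed

lemma is_Dpow_L2: "is_Dpow M \<tau> j f g \<Longrightarrow> L2 M f"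
  by (induction j arbitrary: g) auto

lemma is_Dpow_unique:
  assumes fl: "ergodic_flow M \<tau>"
  shows "is_Dpow M \<tau> j f1 g1 \<Longrightarrow> is_Dpow M \<tau> j f2 g2 \<Longrightarrow> AE \<omega> in M. f1 \<omega> = f2 \<omega>
     \<Longrightarrow> AE \<omega> in M. g1 \<omega> = g2 \<omega>"
proof (induction j arbitrary: g1 g2)
  case 0
  then show ?case by (auto elim: AE_mp)
next
  case (Suc j)
  from Suc.prems obtain h1 h2 where "is_Dpow M \<tau> j f1 h1" "has_gen M \<tau> h1 g1"
    "is_Dpow M \<tau> j f2 h2" "has_gen M \<tau> h2 g2" by auto
  with Suc.IH[of h1 h2] Suc.prems(3) show ?case
    using has_gen_unique[OF fl] by blast
qed

lemma is_Dpow_ergodic_flow_comp: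
  assumes fl: "ergodic_flow M \<tau>"
  shows "is_Dpow M \<tau> j f g \<Longrightarrow> is_Dpow M \<tau> j (\<lambda>\<omega>. f (\<tau> s \<omega>)) (\<lambda>\<omega>. g (\<tau> s \<omega>))"
proof (induction j arbitrary: g)
  case 0
  then have L: "L2 M f" "L2 M g" and ae: "AE \<omega> in M. g \<omega> = f \<omega>" by auto
  note [measurable] = L[unfolded L2_def, THEN conjunct1] ergodic_flow_measurable[OF fl]
  have "AE \<omega> in M. g (\<tau> s \<omega>) = f (\<tau> s \<omega>)" by (rule AE_ergodic_flow_comp[OF fl ae]) measurable
  then show ?case using L2_ergodic_flow_comp[OF fl L(1)] L2_ergodic_flow_comp[OF fl L(2)] by simp
next
  case (Suc j)
  then obtain h where "is_Dpow M \<tau> j f h" "has_gen M \<tau> h g" by auto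
  then show ?case using Suc.IH has_gen_ergodic_flow_comp[OF fl] by (auto intro!: exI[of _ "\<lambda>\<omega>. h (\<tau> s \<omega>)"])
qed

section \<open>Lipschitz continuity along the flow\<close>

lemma abs_integral_flow_comp_mult_le:
  assumes P: "prob_space M" and fl: "ergodic_flow M \<tau>" and Y: "L2 M Y"
    and \<phi>: "\<phi> \<in> borel_measurable M" "\<And>\<omega>. \<bar>\<phi> \<omega>\<bar> \<le> 1"
  shows "\<bar>\<integral>\<omega>. Y (\<tau> t \<omega>) * \<phi> \<omega> \<partial>M\<bar> \<le> sqrt (\<integral>\<omega>. (Y \<omega>)\<^sup>2 \<partial>M)"
proof -
  interpret prob_space M by fact
  have Yt: "L2 M (\<lambda>\<omega>. Y (\<tau> t \<omega>))" by (rule L2_ergodic_flow_comp[OF fl Y])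
  have "(\<integral>\<omega>. \<bar>Y (\<tau> t \<omega>) * \<phi> \<omega>\<bar> \<partial>M) \<le> (\<integral>\<omega>. \<bar>Y (\<tau> t \<omega>)\<bar> \<partial>M)"
  proof (rule integral_mono)
    show "integrable M (\<lambda>\<omega>. \<bar>Y (\<tau> t \<omega>) * \<phi> \<omega>\<bar>)"
      by (rule integrable_abs[OF integrable_L2_mult_bounded[OF Yt \<phi>]])
    show "integrable M (\<lambda>\<omega>. \<bar>Y (\<tau> t \<omega>)\<bar>)" by (rule integrable_abs[OF L2_imp_integrable[OF Yt]])
  qed (simp add: abs_mult mult_left_le \<phi>(2))
  then have "\<bar>\<integral>\<omega>. Y (\<tau> t \<omega>) * \<phi> \<omega> \<partial>M\<bar> \<le> (\<integral>\<omega>. \<bar>Y (\<tau> t \<omega>)\<bar> \<partial>M)"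
    by (rule order.trans[OF integral_abs_bound])
  also have "\<dots> \<le> sqrt (\<integral>\<omega>. (Y (\<tau> t \<omega>))\<^sup>2 \<partial>M)"
    by (rule integral_abs_le_sqrt_integral_square[OF Yt])
  also have "(\<integral>\<omega>. (Y (\<tau> t \<omega>))\<^sup>2 \<partial>M) = (\<integral>\<omega>. (Y \<omega>)\<^sup>2 \<partial>M)"
    using Y by (intro integral_ergodic_flow_comp[OF fl]) (auto simp: L2_def)
  finally show ?thesis .
qed

lemma has_real_derivative_flow_pairing:
  assumes P: "prob_space M" and fl: "ergodic_flow M \<tau>" and hg: "has_gen M \<tau> f g"
    and \<phi>: "\<phi> \<in> borel_measurable M" "\<And>\<omega>. \<bar>\<phi> \<omega>\<bar> \<le> 1"
  shows "((\<lambda>t. \<integral>\<omega>. f (\<tau> t \<omega>) * \<phi> \<omega> \<partial>M) has_real_derivative (\<integral>\<omega>. g (\<tau> t \<omega>) * \<phi> \<omega> \<partial>M)) (at t)"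
proof -
  interpret prob_space M by fact
  have L: "L2 M f" "L2 M g" using hg by (auto simp: has_gen_def)
  note [measurable] = L[unfolded L2_def, THEN conjunct1] ergodic_flow_measurable[OF fl] \<phi>(1)
  define E where "E h \<omega> = (f (\<tau> h \<omega>) - f \<omega>) / h - g \<omega>" for h \<omega>
  have int: "integrable M (\<lambda>\<omega>. F (\<tau> s \<omega>) * \<phi> \<omega>)" if "L2 M F" for F s
    by (rule integrable_L2_mult_bounded[OF L2_ergodic_flow_comp[OF fl that] \<phi>])
  have quotient: "((\<integral>\<omega>. f (\<tau> (t + h) \<omega>) * \<phi> \<omega> \<partial>M) - (\<integral>\<omega>. f (\<tau> t \<omega>) * \<phi> \<omega> \<partial>M)) / h
        - (\<integral>\<omega>. g (\<tau> t \<omega>) * \<phi> \<omega> \<partial>M) = (\<integral>\<omega>. E h (\<tau> t \<omega>) * \<phi> \<omega> \<partial>M)" for h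
  proof -
    have "(\<integral>\<omega>. f (\<tau> (t + h) \<omega>) * \<phi> \<omega> \<partial>M) = (\<integral>\<omega>. f (\<tau> h (\<tau> t \<omega>)) * \<phi> \<omega> \<partial>M)"
      by (rule Bochner_Integration.integral_cong)
        (simp_all add: ergodic_flow_add[OF fl, symmetric] add.commute)
    moreover have "(\<integral>\<omega>. E h (\<tau> t \<omega>) * \<phi> \<omega> \<partial>M) =
        (\<integral>\<omega>. (1/h) * (f (\<tau> h (\<tau> t \<omega>)) * \<phi> \<omega> - f (\<tau> t \<omega>) * \<phi> \<omega>) - g (\<tau> t \<omega>) * \<phi> \<omega> \<partial>M)"
      by (rule Bochner_Integration.integral_cong) (simp_all add: E_def field_simps)
    moreover have "integrable M (\<lambda>\<omega>. f (\<tau> h (\<tau> t \<omega>)) * \<phi> \<omega>)"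
      using int[OF L2_ergodic_flow_comp[OF fl L(1), of h], of t] by simp
    ultimately show ?thesis using int[OF L(1), of t] int[OF L(2), of t] by simp
  qed
  have bound: "\<bar>\<integral>\<omega>. E h (\<tau> t \<omega>) * \<phi> \<omega> \<partial>M\<bar> \<le> sqrt (\<integral>\<omega>. (E h \<omega>)\<^sup>2 \<partial>M)" for h
  proof (rule abs_integral_flow_comp_mult_le[OF P fl _ \<phi>])
    show "L2 M (E h)" unfolding E_def by (rule L2_difference_quotient[OF fl L])
  qed
  have "((\<lambda>h. \<integral>\<omega>. (E h \<omega>)\<^sup>2 \<partial>M) \<longlongrightarrow> 0) (at 0)"
    using hg unfolding has_gen_def E_def by simp
  from tendsto_real_sqrt[OF this] have "((\<lambda>h. sqrt (\<integral>\<omega>. (E h \<omega>)\<^sup>2 \<partial>M)) \<longlongrightarrow> 0) (at 0)"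
    by simp
  then have "((\<lambda>h. \<integral>\<omega>. E h (\<tau> t \<omega>) * \<phi> \<omega> \<partial>M) \<longlongrightarrow> 0) (at 0)"
    by (rule Lim_null_comparison[rotated]) (use bound in \<open>auto intro: always_eventually\<close>)
  then have "((\<lambda>h. ((\<integral>\<omega>. f (\<tau> (t + h) \<omega>) * \<phi> \<omega> \<partial>M) - (\<integral>\<omega>. f (\<tau> t \<omega>) * \<phi> \<omega> \<partial>M)) / h
        - (\<integral>\<omega>. g (\<tau> t \<omega>) * \<phi> \<omega> \<partial>M)) \<longlongrightarrow> 0) (at 0)"
    by (simp only: quotient)
  then show ?thesis unfolding DERIV_def LIM_zero_iff .
qed

lemma flow_pairing_lipschitz:
  assumes P: "prob_space M" and fl: "ergodic_flow M \<tau>" and hg: "has_gen M \<tau> f g"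
    and gb: "AE \<omega> in M. \<bar>g \<omega>\<bar> \<le> K"
    and \<phi>: "\<phi> \<in> borel_measurable M" "\<And>\<omega>. \<bar>\<phi> \<omega>\<bar> \<le> 1"
  shows "\<bar>\<integral>\<omega>. (f (\<tau> s \<omega>) - f \<omega>) * \<phi> \<omega> \<partial>M\<bar> \<le> K * (\<integral>\<omega>. \<bar>\<phi> \<omega>\<bar> \<partial>M) * \<bar>s\<bar>"
proof -
  interpret prob_space M by fact
  have L: "L2 M f" "L2 M g" using hg by (auto simp: has_gen_def)
  note [measurable] = L[unfolded L2_def, THEN conjunct1] ergodic_flow_measurable[OF fl] \<phi>(1)
  define u where "u t = (\<integral>\<omega>. f (\<tau> t \<omega>) * \<phi> \<omega> \<partial>M)" for t
  have deriv_bound: "\<bar>\<integral>\<omega>. g (\<tau> t \<omega>) * \<phi> \<omega> \<partial>M\<bar> \<le> K * (\<integral>\<omega>. \<bar>\<phi> \<omega>\<bar> \<partial>M)" for t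
  proof -
    have "AE \<omega> in M. \<bar>g (\<tau> t \<omega>)\<bar> \<le> K" by (rule AE_ergodic_flow_comp[OF fl gb]) measurable
    then have "AE \<omega> in M. \<bar>g (\<tau> t \<omega>) * \<phi> \<omega>\<bar> \<le> K * \<bar>\<phi> \<omega>\<bar>"
      by eventually_elim (simp add: abs_mult mult_right_mono)
    moreover have "integrable M (\<lambda>\<omega>. \<bar>\<phi> \<omega>\<bar>)"
      by (rule integrable_const_bound[where B=1]) (use \<phi> in auto)
    ultimately have "(\<integral>\<omega>. \<bar>g (\<tau> t \<omega>) * \<phi> \<omega>\<bar> \<partial>M) \<le> (\<integral>\<omega>. K * \<bar>\<phi> \<omega>\<bar> \<partial>M)"
      using integrable_L2_mult_bounded[OF L2_ergodic_flow_comp[OF fl L(2)] \<phi>]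
      by (intro integral_mono_AE) auto
    then have "(\<integral>\<omega>. \<bar>g (\<tau> t \<omega>) * \<phi> \<omega>\<bar> \<partial>M) \<le> K * (\<integral>\<omega>. \<bar>\<phi> \<omega>\<bar> \<partial>M)" by simp
    then show ?thesis by (rule order.trans[OF integral_abs_bound])
  qed
  have "norm (u s - u 0) \<le> K * (\<integral>\<omega>. \<bar>\<phi> \<omega>\<bar> \<partial>M) * norm (s - 0)"
  proof (rule field_differentiable_bound[OF convex_UNIV])
    show "(u has_field_derivative (\<integral>\<omega>. g (\<tau> t \<omega>) * \<phi> \<omega> \<partial>M)) (at t within UNIV)" for t
      unfolding u_def by (rule has_real_derivative_flow_pairing[OF P fl hg \<phi>])
  qed (use deriv_bound in auto)
  moreover have "u s - u 0 = (\<integral>\<omega>. (f (\<tau> s \<omega>) - f \<omega>) * \<phi> \<omega> \<partial>M)"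
  proof -
    have "u 0 = (\<integral>\<omega>. f \<omega> * \<phi> \<omega> \<partial>M)"
      unfolding u_def by (rule Bochner_Integration.integral_cong) (simp_all add: ergodic_flow_zero[OF fl])
    then show ?thesis
      using integrable_L2_mult_bounded[OF L2_ergodic_flow_comp[OF fl L(1)] \<phi>]
        integrable_L2_mult_bounded[OF L(1) \<phi>]
      unfolding u_def by (simp add: left_diff_distrib)
  qed
  ultimately show ?thesis by simp
qed

lemma AE_le_of_set_integrals_le:
  fixes Y :: "'a \<Rightarrow> real"
  assumes "finite_measure M" and Y: "integrable M Y"
    and H: "\<And>A. A \<in> sets M \<Longrightarrow> (\<integral>\<omega>. Y \<omega> * indicator A \<omega> \<partial>M) \<le> c * measure M A"
  shows "AE \<omega> in M. Y \<omega> \<le> c"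
proof -
  interpret finite_measure M by fact
  note [measurable] = borel_measurable_integrable[OF Y]
  define A where "A = {\<omega>\<in>space M. c < Y \<omega>}"
  have A: "A \<in> sets M" unfolding A_def by measurable
  have YA: "integrable M (\<lambda>\<omega>. Y \<omega> * indicator A \<omega>)"
    using integrable_mult_indicator[OF A Y] by (simp add: mult.commute)
  have IA: "integrable M (\<lambda>\<omega>. indicator A \<omega> :: real)"
    using A by (simp add: integrable_indicator_iff less_top[symmetric])
  have nonneg: "AE \<omega> in M. 0 \<le> (Y \<omega> - c) * indicator A \<omega>"
    by (rule AE_I2) (auto simp: A_def indicator_def)
  have "(\<integral>\<omega>. (Y \<omega> - c) * indicator A \<omega> \<partial>M) = (\<integral>\<omega>. Y \<omega> * indicator A \<omega> \<partial>M) - c * measure M A"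
    using YA IA A by (simp add: left_diff_distrib)
  also have "\<dots> \<le> 0" using H[OF A] by simp
  finally have "(\<integral>\<omega>. (Y \<omega> - c) * indicator A \<omega> \<partial>M) = 0"
    using integral_nonneg_AE[OF nonneg] by simp
  moreover have "integrable M (\<lambda>\<omega>. (Y \<omega> - c) * indicator A \<omega>)"
    using YA IA by (simp add: left_diff_distrib)
  ultimately have "AE \<omega> in M. (Y \<omega> - c) * indicator A \<omega> = 0"
    using integral_nonneg_eq_0_iff_AE[OF _ nonneg] by simp
  then show ?thesis by (rule AE_mp) (rule AE_I2, auto simp: A_def indicator_def)
qed

lemma has_gen_bounded_imp_flow_lipschitz:
  assumes P: "prob_space M" and fl: "ergodic_flow M \<tau>" and hg: "has_gen M \<tau> f g"
    and gb: "AE \<omega> in M. \<bar>g \<omega>\<bar> \<le> K"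
  shows "AE \<omega> in M. \<bar>f (\<tau> s \<omega>) - f \<omega>\<bar> \<le> K * \<bar>s\<bar>"
proof -
  interpret prob_space M by fact
  have L: "L2 M f" using hg by (simp add: has_gen_def)
  have X: "integrable M (\<lambda>\<omega>. f (\<tau> s \<omega>) - f \<omega>)"
    by (rule L2_imp_integrable[OF L2_diff[OF L2_ergodic_flow_comp[OF fl L] L]])
  have test: "\<bar>\<integral>\<omega>. (f (\<tau> s \<omega>) - f \<omega>) * indicator A \<omega> \<partial>M\<bar> \<le> K * \<bar>s\<bar> * measure M A"
    if "A \<in> sets M" for A
    using flow_pairing_lipschitz[OF P fl hg gb, of "indicator A" s] that
    by (simp add: mult_ac)
  have "AE \<omega> in M. f (\<tau> s \<omega>) - f \<omega> \<le> K * \<bar>s\<bar>"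
    by (rule AE_le_of_set_integrals_le[OF finite_measure X]) (use test abs_le_D1 in blast)
  moreover have "AE \<omega> in M. - (f (\<tau> s \<omega>) - f \<omega>) \<le> K * \<bar>s\<bar>"
  proof (rule AE_le_of_set_integrals_le[OF finite_measure integrable_minus[OF X]])
    fix A assume "A \<in> sets M"
    moreover have "(\<integral>\<omega>. - (f (\<tau> s \<omega>) - f \<omega>) * indicator A \<omega> \<partial>M)
        = - (\<integral>\<omega>. (f (\<tau> s \<omega>) - f \<omega>) * indicator A \<omega> \<partial>M)"
      by (simp only: mult_minus_left integral_minus)
    ultimately show "(\<integral>\<omega>. - (f (\<tau> s \<omega>) - f \<omega>) * indicator A \<omega> \<partial>M) \<le> K * \<bar>s\<bar> * measure M A"
      using test by fastforce
  qed
  ultimately show ?thesis by eventually_elim linarith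
qed

text \<open>The symmetry \<open>c(\<tau>\<^sub>z \<omega>, -z) = c(\<omega>, z)\<close> turns the reflection \<open>z \<mapsto> -z\<close> into a shift along the
  flow, so the Lipschitz bound on \<open>D\<^sup>kc\<close> coming from \<open>D\<^sup>k\<^sup>+\<^sup>1c\<close> controls \<open>D\<^sup>kc(-z) - D\<^sup>kc(z)\<close>.\<close>

lemma is_Dpow_reflection_estimate:
  assumes P: "prob_space M" and fl: "ergodic_flow M \<tau>"
    and d: "is_Dpow M \<tau> k a d" and e: "is_Dpow M \<tau> k b e"
    and smooth: "\<forall>j. \<exists>h. is_Dpow M \<tau> j a h \<and> (AE \<omega> in M. \<bar>h \<omega>\<bar> \<le> C j)"
    and reflect: "AE \<omega> in M. b (\<tau> z \<omega>) = a \<omega>"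
  shows "AE \<omega> in M. \<bar>d \<omega>\<bar> \<le> C k \<and> \<bar>e \<omega> - d \<omega>\<bar> \<le> C (Suc k) * \<bar>z\<bar>"
proof -
  note [measurable] = ergodic_flow_measurable[OF fl]
    is_Dpow_L2[OF d, unfolded L2_def, THEN conjunct1] is_Dpow_L2[OF e, unfolded L2_def, THEN conjunct1]
  obtain h0 where h0: "is_Dpow M \<tau> k a h0" "AE \<omega> in M. \<bar>h0 \<omega>\<bar> \<le> C k" using smooth by blast
  obtain h1 where h1: "is_Dpow M \<tau> (Suc k) a h1" "AE \<omega> in M. \<bar>h1 \<omega>\<bar> \<le> C (Suc k)"
    using smooth by blast
  then obtain hk where hk: "is_Dpow M \<tau> k a hk" "has_gen M \<tau> hk h1" by auto
  have "AE \<omega> in M. d \<omega> = h0 \<omega>" by (rule is_Dpow_unique[OF fl d h0(1)]) simp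
  moreover have "AE \<omega> in M. d \<omega> = hk \<omega>" by (rule is_Dpow_unique[OF fl d hk(1)]) simp
  moreover have "AE \<omega> in M. e \<omega> = hk (\<tau> (-z) \<omega>)"
  proof (rule is_Dpow_unique[OF fl e is_Dpow_ergodic_flow_comp[OF fl hk(1)]])
    have "AE \<omega> in M. b (\<tau> z (\<tau> (-z) \<omega>)) = a (\<tau> (-z) \<omega>)"
      by (rule AE_ergodic_flow_comp[OF fl reflect]) measurable
    then show "AE \<omega> in M. b \<omega> = a (\<tau> (-z) \<omega>)"
      by (rule AE_mp) (rule AE_I2, simp add: ergodic_flow_add[OF fl, symmetric] ergodic_flow_zero[OF fl])
  qed
  moreover have "AE \<omega> in M. \<bar>hk (\<tau> (-z) \<omega>) - hk \<omega>\<bar> \<le> C (Suc k) * \<bar>-z\<bar>"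
    by (rule has_gen_bounded_imp_flow_lipschitz[OF P fl hk(2) h1(2)])
  ultimately show ?thesis using h0(2) by eventually_elim auto
qed

section \<open>Symmetric Levy measures\<close>

lemma sym_levy_measureD:
  assumes "sym_levy_measure \<nu>"
  shows sym_levy_measure_sets: "sets \<nu> = sets borel"
    and sym_levy_measure_space: "space \<nu> = UNIV"
    and sym_levy_measure_measurable: "borel_measurable \<nu> = borel_measurable borel"
    and sym_levy_measure_reflect: "distr \<nu> borel uminus = \<nu>"
  using assms sets_eq_imp_space_eq[of \<nu> borel] measurable_cong_sets[of \<nu> borel]
  unfolding sym_levy_measure_def by auto

lemma AE_sym_levy_measure_reflect:
  assumes L: "sym_levy_measure \<nu>" and P: "AE z in \<nu>. P z"
  shows "AE z in \<nu>. P (- z)"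
proof -
  have um: "uminus \<in> measurable \<nu> borel" by (simp add: sym_levy_measure_measurable[OF L])
  from P obtain N where N: "{z \<in> space \<nu>. \<not> P z} \<subseteq> N" "N \<in> null_sets \<nu>" by (auto elim!: AE_E)
  have "N \<in> null_sets (distr \<nu> borel uminus)" using N(2) by (simp add: sym_levy_measure_reflect[OF L])
  then have "uminus -` N \<inter> space \<nu> \<in> null_sets \<nu>" using null_sets_distr_iff[OF um] by blast
  then show ?thesis
    by (rule AE_I') (use N(1) in \<open>auto simp: sym_levy_measure_space[OF L]\<close>)
qed

lemma reflect_measurable_pair:
  assumes L: "sym_levy_measure \<nu>" and f: "(\<lambda>(\<omega>, z). f \<omega> z) \<in> borel_measurable (M \<Otimes>\<^sub>M \<nu>)"
  shows "(\<lambda>p. f (fst p) (- snd p)) \<in> borel_measurable (M \<Otimes>\<^sub>M \<nu>)"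
proof -
  have "(\<lambda>x::real. - x) \<in> measurable \<nu> \<nu>"
    using measurable_cong_sets[OF sym_levy_measure_sets[OF L] sym_levy_measure_sets[OF L]] by simp
  then have "(\<lambda>p. (fst p, - snd p)) \<in> measurable (M \<Otimes>\<^sub>M \<nu>) (M \<Otimes>\<^sub>M \<nu>)"
    by (intro measurable_Pair measurable_fst measurable_compose[OF measurable_snd])
  from measurable_comp[OF this f] show ?thesis by (simp add: comp_def)
qed

lemma integral_sym_levy_measure_reflect:
  fixes f :: "real \<Rightarrow> real"
  assumes L: "sym_levy_measure \<nu>" and f: "f \<in> borel_measurable borel"
  shows "(\<integral>z. f (- z) \<partial>\<nu>) = (\<integral>z. f z \<partial>\<nu>)"
  using integral_distr[OF _ f, of uminus \<nu>]
  by (simp add: sym_levy_measure_reflect[OF L] sym_levy_measure_measurable[OF L])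

lemma integrable_sym_levy_measure_reflect:
  fixes f :: "real \<Rightarrow> real"
  assumes L: "sym_levy_measure \<nu>" and f: "integrable \<nu> f"
  shows "integrable \<nu> (\<lambda>z. f (- z))"
proof -
  have "f \<in> borel_measurable borel"
    using borel_measurable_integrable[OF f] by (simp add: sym_levy_measure_measurable[OF L])
  with f show ?thesis
    using integrable_distr_eq[of uminus \<nu> borel f]
    by (simp add: sym_levy_measure_reflect[OF L] sym_levy_measure_measurable[OF L])
qed

lemma integrable_sym_levy_measure_min_1_square:
  assumes L: "sym_levy_measure \<nu>"
  shows "integrable \<nu> (\<lambda>z. min 1 (z\<^sup>2))"
  using L by (intro integrableI_nonneg)
    (auto simp: sym_levy_measure_def sym_levy_measure_measurable[OF L])

lemma emeasure_sym_levy_measure_abs_ge: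
  assumes L: "sym_levy_measure \<nu>" and e: "0 < e"
  shows "emeasure \<nu> {z. e \<le> \<bar>z\<bar>} < \<infinity>"
proof -
  define c where "c = min 1 (e\<^sup>2)"
  have c: "0 < c" using e by (simp add: c_def)
  have ind_real: "indicator {z. e \<le> \<bar>z\<bar>} z \<le> min 1 (z\<^sup>2) / c" for z :: real
  proof (cases "e \<le> \<bar>z\<bar>")
    case True
    then have "e\<^sup>2 \<le> z\<^sup>2" using e by (metis abs_le_square_iff abs_of_pos)
    then show ?thesis using True c by (simp add: c_def field_simps)
  qed (use c in simp)
  have ind: "indicator {z. e \<le> \<bar>z\<bar>} z \<le> ennreal (1 / c) * ennreal (min 1 (z\<^sup>2))" for z :: real
  proof -
    have "ennreal (indicator {z. e \<le> \<bar>z\<bar>} z) \<le> ennreal (1 / c * min 1 (z\<^sup>2))"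
      using ind_real[of z] by (intro ennreal_leI) simp
    also have "\<dots> = ennreal (1 / c) * ennreal (min 1 (z\<^sup>2))" using c by (intro ennreal_mult) auto
    finally show ?thesis by (simp only: ennreal_indicator)
  qed
  have "emeasure \<nu> {z. e \<le> \<bar>z\<bar>} = (\<integral>\<^sup>+ z. indicator {z. e \<le> \<bar>z\<bar>} z \<partial>\<nu>)"
    using sym_levy_measure_sets[OF L] by simp
  also have "\<dots> \<le> (\<integral>\<^sup>+ z. ennreal (1 / c) * ennreal (min 1 (z\<^sup>2)) \<partial>\<nu>)"
    by (intro nn_integral_mono ind)
  also have "\<dots> = ennreal (1 / c) * (\<integral>\<^sup>+ z. ennreal (min 1 (z\<^sup>2)) \<partial>\<nu>)"
    by (rule nn_integral_cmult) (simp add: sym_levy_measure_measurable[OF L])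
  also have "\<dots> < \<infinity>" using L by (simp add: sym_levy_measure_def ennreal_mult_less_top)
  finally show ?thesis .
qed

lemma sigma_finite_sym_levy_measure:
  assumes L: "sym_levy_measure \<nu>"
  shows "sigma_finite_measure \<nu>"
proof
  define A where "A = insert {0} (range (\<lambda>n::nat. {z::real. 1 / Suc n \<le> \<bar>z\<bar>}))"
  have fin: "emeasure \<nu> {z. 1 / Suc n \<le> \<bar>z\<bar>} \<noteq> \<infinity>" for n
    using emeasure_sym_levy_measure_abs_ge[OF L, of "1 / Suc n"] by simp
  have "\<Union> A = UNIV"
  proof -
    have "z \<in> \<Union> A" if z: "z \<noteq> 0" for z :: real
    proof -
      obtain n where "inverse (real (Suc n)) < \<bar>z\<bar>" using reals_Archimedean[of "\<bar>z\<bar>"] z by auto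
      then have "z \<in> {z. 1 / Suc n \<le> \<bar>z\<bar>}" by (simp add: inverse_eq_divide)
      then show ?thesis unfolding A_def by blast
    qed
    then show ?thesis by (auto simp: A_def)
  qed
  moreover have "A \<subseteq> sets \<nu>" by (auto simp: A_def sym_levy_measure_sets[OF L])
  moreover have "\<forall>a\<in>A. emeasure \<nu> a \<noteq> \<infinity>"
    using fin L by (auto simp: A_def sym_levy_measure_def)
  ultimately show "\<exists>A. countable A \<and> A \<subseteq> sets \<nu> \<and> \<Union> A = space \<nu> \<and> (\<forall>a\<in>A. emeasure \<nu> a \<noteq> \<infinity>)"
    by (intro exI[of _ A]) (auto simp: A_def sym_levy_measure_space[OF L])
qed

definition small_jump_moment :: "real measure \<Rightarrow> real \<Rightarrow> real" where
  "small_jump_moment \<nu> a = (\<integral>z. indicator {z. \<bar>z\<bar> \<le> a} z * z\<^sup>2 \<partial>\<nu>)"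

lemma small_jump_square_le_min_1_square:
  "a \<le> 1 \<Longrightarrow> indicator {z. \<bar>z\<bar> \<le> a} z * z\<^sup>2 \<le> min 1 (z\<^sup>2 :: real)"
  by (auto simp: indicator_def abs_square_le_1)

lemma integrable_small_jump_square:
  assumes L: "sym_levy_measure \<nu>" and "a \<le> 1"
  shows "integrable \<nu> (\<lambda>z. indicator {z. \<bar>z\<bar> \<le> a} z * z\<^sup>2)"
proof (rule Bochner_Integration.integrable_bound[OF integrable_sym_levy_measure_min_1_square[OF L]])
  show "(\<lambda>z. indicator {z. \<bar>z\<bar> \<le> a} z * z\<^sup>2) \<in> borel_measurable \<nu>"
    by (simp add: sym_levy_measure_measurable[OF L])
  show "AE z in \<nu>. norm (indicator {z. \<bar>z\<bar> \<le> a} z * z\<^sup>2) \<le> norm (min 1 (z\<^sup>2))"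
    using small_jump_square_le_min_1_square[OF \<open>a \<le> 1\<close>] by (simp add: indicator_def)
qed

lemma small_jump_moment_tendsto_0:
  assumes L: "sym_levy_measure \<nu>"
  shows "(small_jump_moment \<nu> \<longlongrightarrow> 0) (at_right 0)"
proof -
  have "((\<lambda>t. \<integral>z. indicator {z. \<bar>z\<bar> \<le> inverse t} z * z\<^sup>2 \<partial>\<nu>) \<longlongrightarrow> (\<integral>z. 0 \<partial>\<nu>)) at_top"
  proof (rule integral_dominated_convergence_at_top[OF _ _ integrable_sym_levy_measure_min_1_square[OF L]])
    show "(\<lambda>z. indicator {z. \<bar>z\<bar> \<le> inverse t} z * z\<^sup>2) \<in> borel_measurable \<nu>" for t
      by (simp add: sym_levy_measure_measurable[OF L])
    have "\<forall>\<^sub>F t in at_top. indicator {z. \<bar>z\<bar> \<le> inverse t} z * z\<^sup>2 = (0::real)" for z :: real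
    proof (cases "z = 0")
      case False
      have "\<forall>\<^sub>F t in at_top. inverse \<bar>z\<bar> < t" by (rule eventually_gt_at_top)
      then show ?thesis
      proof eventually_elim
        case (elim t)
        have "0 < \<bar>z\<bar>" using False by simp
        then have "inverse t < \<bar>z\<bar>"
          using elim by (metis inverse_inverse_eq inverse_less_iff_less inverse_positive_iff_positive order.strict_trans)
        then show ?case by (simp add: indicator_def)
      qed
    qed simp
    then show "AE z in \<nu>. ((\<lambda>t. indicator {z. \<bar>z\<bar> \<le> inverse t} z * z\<^sup>2) \<longlongrightarrow> 0) at_top"
      by (intro AE_I2 tendsto_eventually)
    have "\<forall>\<^sub>F t in at_top. (1::real) \<le> t" by (rule eventually_ge_at_top)
    then show "\<forall>\<^sub>F t in at_top. AE z in \<nu>. norm (indicator {z. \<bar>z\<bar> \<le> inverse t} z * z\<^sup>2) \<le> min 1 (z\<^sup>2)"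
      by eventually_elim
        (use small_jump_square_le_min_1_square[of "inverse _"] in \<open>simp add: indicator_def inverse_le_1_iff\<close>)
  qed simp
  then show ?thesis unfolding at_right_to_top filterlim_filtermap small_jump_moment_def by simp
qed

section \<open>The symmetrised integrand\<close>

lemma Dpow_version_regular_AE:
  assumes P: "prob_space M" and fl: "ergodic_flow M \<tau>" and L: "sym_levy_measure \<nu>"
    and c_sym: "AE z in \<nu>. AE \<omega> in M. c (\<tau> z \<omega>) (- z) = c \<omega> z"
    and c_smooth: "AE z in \<nu>. \<forall>j. \<exists>h. is_Dpow M \<tau> j (\<lambda>\<omega>. c \<omega> z) h \<and> (AE \<omega> in M. \<bar>h \<omega>\<bar> \<le> C j)"
    and dc_meas: "(\<lambda>(\<omega>, z). dc \<omega> z) \<in> borel_measurable (M \<Otimes>\<^sub>M \<nu>)"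
    and dc_version: "AE z in \<nu>. is_Dpow M \<tau> k (\<lambda>\<omega>. c \<omega> z) (\<lambda>\<omega>. dc \<omega> z)"
  shows "AE \<omega> in M. AE z in \<nu>. \<bar>dc \<omega> z\<bar> \<le> C k \<and> \<bar>dc \<omega> (- z) - dc \<omega> z\<bar> \<le> C (Suc k) * \<bar>z\<bar>"
proof -
  interpret prob_space M by fact
  interpret sigma_finite_measure \<nu> by (rule sigma_finite_sym_levy_measure[OF L])
  interpret pair_sigma_finite M \<nu> ..
  have "AE z in \<nu>. AE \<omega> in M. \<bar>dc \<omega> z\<bar> \<le> C k \<and> \<bar>dc \<omega> (- z) - dc \<omega> z\<bar> \<le> C (Suc k) * \<bar>z\<bar>"
    using dc_version AE_sym_levy_measure_reflect[OF L dc_version] c_smooth c_sym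
    by eventually_elim (rule is_Dpow_reflection_estimate[OF P fl]; simp)
  moreover have [measurable]: "(\<lambda>p. dc (fst p) (snd p)) \<in> borel_measurable (M \<Otimes>\<^sub>M \<nu>)"
    using dc_meas by (simp add: case_prod_beta')
  note [measurable] = reflect_measurable_pair[OF L dc_meas]
  have [measurable]: "(\<lambda>p. \<bar>snd p\<bar>) \<in> borel_measurable (M \<Otimes>\<^sub>M \<nu>)"
    by (rule measurable_compose[OF measurable_snd]) (simp add: sym_levy_measure_measurable[OF L])
  have "{p \<in> space (M \<Otimes>\<^sub>M \<nu>). \<bar>dc (fst p) (snd p)\<bar> \<le> C k \<and>
      \<bar>dc (fst p) (- snd p) - dc (fst p) (snd p)\<bar> \<le> C (Suc k) * \<bar>snd p\<bar>} \<in> sets (M \<Otimes>\<^sub>M \<nu>)"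
    by measurable
  ultimately show ?thesis using AE_commute by simp
qed

definition even_part :: "(real \<Rightarrow> real) \<Rightarrow> real \<Rightarrow> real" where
  "even_part f z = (f z + f (- z)) / 2"

definition principal_value_integral :: "real measure \<Rightarrow> (real \<Rightarrow> real) \<Rightarrow> real" where
  "principal_value_integral \<nu> f = (\<integral>z. indicator {z. \<bar>z\<bar> \<le> 1} z * even_part f z \<partial>\<nu>)"

locale small_jump_integrand =
  fixes \<nu> :: "real measure" and G D :: "real \<Rightarrow> real" and C K0 K1 :: real
  assumes levy: "sym_levy_measure \<nu>"
    and G_measurable[measurable]: "G \<in> borel_measurable borel"
    and D_measurable[measurable]: "D \<in> borel_measurable borel"
    and G_bound: "\<And>z. \<bar>z\<bar> \<le> 1 \<Longrightarrow> \<bar>G z\<bar> \<le> C * \<bar>z\<bar>"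
    and G_even_bound: "\<And>z. \<bar>z\<bar> \<le> 1 \<Longrightarrow> \<bar>G z + G (- z)\<bar> \<le> C * z\<^sup>2"
    and D_regular: "AE z in \<nu>. \<bar>D z\<bar> \<le> K0 \<and> \<bar>D (- z) - D z\<bar> \<le> K1 * \<bar>z\<bar>"
begin

abbreviation "H \<equiv> even_part (\<lambda>z. G z * D z)"

abbreviation "K \<equiv> \<bar>K0\<bar> + \<bar>K1\<bar>"

lemma C_nonneg: "0 \<le> C"
  using G_bound[of 1] by simp

text \<open>The first-order part of \<open>G\<close> cancels in the even part:
  \<open>G(z)D(z) + G(-z)D(-z) = (G(z) + G(-z))D(z) + G(-z)(D(-z) - D(z))\<close>.\<close>

lemma even_part_bound: "AE z in \<nu>. \<bar>z\<bar> \<le> 1 \<longrightarrow> \<bar>H z\<bar> \<le> C * K * z\<^sup>2"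
  using D_regular
proof eventually_elim
  case (elim z)
  show ?case
  proof
    assume z: "\<bar>z\<bar> \<le> 1"
    have "\<bar>(G z + G (- z)) * D z\<bar> \<le> C * z\<^sup>2 * \<bar>K0\<bar>"
      unfolding abs_mult by (rule mult_mono) (use G_even_bound[OF z] elim in auto)
    moreover have "\<bar>G (- z) * (D (- z) - D z)\<bar> \<le> C * \<bar>z\<bar> * (\<bar>K1\<bar> * \<bar>z\<bar>)"
      unfolding abs_mult using G_bound[of "- z"] z elim C_nonneg
      by (intro mult_mono) (auto intro: order.trans[OF _ mult_right_mono[of K1 "\<bar>K1\<bar>"]])
    moreover have "G z * D z + G (- z) * D (- z) = (G z + G (- z)) * D z + G (- z) * (D (- z) - D z)"
      by (simp add: algebra_simps)
    ultimately have "\<bar>G z * D z + G (- z) * D (- z)\<bar> \<le> C * z\<^sup>2 * \<bar>K0\<bar> + C * \<bar>z\<bar> * (\<bar>K1\<bar> * \<bar>z\<bar>)"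
      by (smt (verit) abs_triangle_ineq)
    also have "\<dots> = C * K * z\<^sup>2" by (simp add: algebra_simps power2_eq_square abs_mult_self_eq)
    finally show "\<bar>H z\<bar> \<le> C * K * z\<^sup>2" using C_nonneg by (simp add: even_part_def)
  qed
qed

lemma integrable_even_part_on:
  assumes B: "B \<in> sets borel" "B \<subseteq> {z. \<bar>z\<bar> \<le> 1}"
  shows "integrable \<nu> (\<lambda>z. indicator B z * H z)"
proof (rule Bochner_Integration.integrable_bound)
  show "integrable \<nu> (\<lambda>z. C * K * min 1 (z\<^sup>2))"
    using integrable_sym_levy_measure_min_1_square[OF levy] by simp
  show "(\<lambda>z. indicator B z * H z) \<in> borel_measurable \<nu>"
    using B(1) by (simp add: sym_levy_measure_measurable[OF levy] even_part_def)
  show "AE z in \<nu>. norm (indicator B z * H z) \<le> norm (C * K * min 1 (z\<^sup>2))"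
    using even_part_bound
  proof eventually_elim
    case (elim z)
    have nonneg: "0 \<le> C * K * min 1 (z\<^sup>2)" using C_nonneg by simp
    show ?case
    proof (cases "z \<in> B")
      case True
      then have "z\<^sup>2 \<le> 1" using B(2) abs_square_le_1 by blast
      then show ?thesis using True elim B(2) by (auto simp: min_def)
    qed (use nonneg in simp)
  qed
qed

lemma small_jump_even_part_bound:
  assumes "a \<le> 1"
  shows "\<bar>\<integral>z. indicator {z. \<bar>z\<bar> \<le> a} z * H z \<partial>\<nu>\<bar> \<le> C * K * small_jump_moment \<nu> a"
proof -
  have "\<bar>\<integral>z. indicator {z. \<bar>z\<bar> \<le> a} z * H z \<partial>\<nu>\<bar> \<le> (\<integral>z. \<bar>indicator {z. \<bar>z\<bar> \<le> a} z * H z\<bar> \<partial>\<nu>)"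
    by (rule integral_abs_bound)
  also have "\<dots> \<le> (\<integral>z. C * K * (indicator {z. \<bar>z\<bar> \<le> a} z * z\<^sup>2) \<partial>\<nu>)"
  proof (rule integral_mono_AE)
    show "integrable \<nu> (\<lambda>z. \<bar>indicator {z. \<bar>z\<bar> \<le> a} z * H z\<bar>)"
      by (rule integrable_abs, rule integrable_even_part_on) (use assms in auto)
    show "integrable \<nu> (\<lambda>z. C * K * (indicator {z. \<bar>z\<bar> \<le> a} z * z\<^sup>2))"
      using integrable_small_jump_square[OF levy assms] by simp
    show "AE z in \<nu>. \<bar>indicator {z. \<bar>z\<bar> \<le> a} z * H z\<bar> \<le> C * K * (indicator {z. \<bar>z\<bar> \<le> a} z * z\<^sup>2)"
      using even_part_bound by eventually_elim (use assms in \<open>auto simp: indicator_def\<close>)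
  qed
  finally show ?thesis by (simp add: small_jump_moment_def)
qed

lemma integrable_truncated_integrand:
  assumes "0 < \<alpha>"
  shows "integrable \<nu> (\<lambda>z. indicator {z. \<alpha> < \<bar>z\<bar> \<and> \<bar>z\<bar> \<le> 1} z * (G z * D z))"
proof (rule Bochner_Integration.integrable_bound)
  show "integrable \<nu> (\<lambda>z. C * \<bar>K0\<bar> / \<alpha> * min 1 (z\<^sup>2))"
    using integrable_sym_levy_measure_min_1_square[OF levy] by simp
  show "(\<lambda>z. indicator {z. \<alpha> < \<bar>z\<bar> \<and> \<bar>z\<bar> \<le> 1} z * (G z * D z)) \<in> borel_measurable \<nu>"
    by (simp add: sym_levy_measure_measurable[OF levy])
  show "AE z in \<nu>. norm (indicator {z. \<alpha> < \<bar>z\<bar> \<and> \<bar>z\<bar> \<le> 1} z * (G z * D z))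
      \<le> norm (C * \<bar>K0\<bar> / \<alpha> * min 1 (z\<^sup>2))"
    using D_regular
  proof eventually_elim
    case (elim z)
    show ?case
    proof (cases "\<alpha> < \<bar>z\<bar> \<and> \<bar>z\<bar> \<le> 1")
      case True
      then have z: "\<alpha> < \<bar>z\<bar>" "\<bar>z\<bar> \<le> 1" by auto
      have "norm (indicator {z. \<alpha> < \<bar>z\<bar> \<and> \<bar>z\<bar> \<le> 1} z * (G z * D z)) = \<bar>G z * D z\<bar>"
        using True by simp
      also have "\<dots> \<le> C * \<bar>z\<bar> * \<bar>K0\<bar>"
        unfolding abs_mult by (rule mult_mono) (use G_bound[OF z(2)] elim C_nonneg in auto)
      also have "\<dots> \<le> C * \<bar>K0\<bar> / \<alpha> * z\<^sup>2"
      proof -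
        have "\<alpha> * \<bar>z\<bar> \<le> \<bar>z\<bar> * \<bar>z\<bar>" using z by (intro mult_right_mono) auto
        then have "\<bar>z\<bar> \<le> z\<^sup>2 / \<alpha>" using assms by (simp add: field_simps power2_eq_square)
        then show ?thesis using C_nonneg mult_left_mono[of "\<bar>z\<bar>" "z\<^sup>2 / \<alpha>" "C * \<bar>K0\<bar>"] by (simp add: mult_ac)
      qed
      also have "\<dots> = norm (C * \<bar>K0\<bar> / \<alpha> * min 1 (z\<^sup>2))"
      proof -
        have "min 1 (z\<^sup>2) = z\<^sup>2" using z(2) abs_square_le_1 min_absorb2 by blast
        moreover have "0 \<le> C * \<bar>K0\<bar> / \<alpha> * z\<^sup>2" using C_nonneg assms by simp
        ultimately show ?thesis unfolding real_norm_def by (simp only: abs_of_nonneg)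
      qed
      finally show ?thesis .
    qed (use C_nonneg assms in simp)
  qed
qed

lemma truncated_integral_eq_even_part:
  assumes "0 < \<alpha>"
  shows "(LINT z:{z. \<alpha> < \<bar>z\<bar> \<and> \<bar>z\<bar> \<le> 1}|\<nu>. G z * D z)
    = (\<integral>z. indicator {z. \<alpha> < \<bar>z\<bar> \<and> \<bar>z\<bar> \<le> 1} z * H z \<partial>\<nu>)"
proof -
  define A where "A = {z::real. \<alpha> < \<bar>z\<bar> \<and> \<bar>z\<bar> \<le> 1}"
  define u where "u z = indicator A z * (G z * D z)" for z
  have u_measurable: "u \<in> borel_measurable borel" unfolding u_def A_def by measurable
  have u: "integrable \<nu> u" unfolding u_def A_def by (rule integrable_truncated_integrand[OF assms])
  have "(LINT z:A|\<nu>. G z * D z) = ((\<integral>z. u z \<partial>\<nu>) + (\<integral>z. u (- z) \<partial>\<nu>)) / 2"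
    using integral_sym_levy_measure_reflect[OF levy u_measurable] by (simp add: set_lebesgue_integral_def u_def)
  also have "\<dots> = (\<integral>z. (u z + u (- z)) / 2 \<partial>\<nu>)"
    using u integrable_sym_levy_measure_reflect[OF levy u] by simp
  also have "\<dots> = (\<integral>z. indicator A z * H z \<partial>\<nu>)"
    by (rule Bochner_Integration.integral_cong) (auto simp: u_def even_part_def A_def indicator_def algebra_simps)
  finally show ?thesis unfolding A_def .
qed

lemma truncated_integral_approx:
  assumes "0 < \<alpha>" "\<alpha> \<le> 1"
  shows "\<bar>(LINT z:{z. \<alpha> < \<bar>z\<bar> \<and> \<bar>z\<bar> \<le> 1}|\<nu>. G z * D z) - principal_value_integral \<nu> (\<lambda>z. G z * D z)\<bar>
    \<le> C * K * small_jump_moment \<nu> \<alpha>"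
proof -
  have "(\<integral>z. indicator {z. \<bar>z\<bar> \<le> \<alpha>} z * H z \<partial>\<nu>)
      = (\<integral>z. indicator {z. \<bar>z\<bar> \<le> 1} z * H z - indicator {z. \<alpha> < \<bar>z\<bar> \<and> \<bar>z\<bar> \<le> 1} z * H z \<partial>\<nu>)"
    by (rule Bochner_Integration.integral_cong) (use assms in \<open>auto simp: indicator_def\<close>)
  also have "\<dots> = principal_value_integral \<nu> (\<lambda>z. G z * D z) - (LINT z:{z. \<alpha> < \<bar>z\<bar> \<and> \<bar>z\<bar> \<le> 1}|\<nu>. G z * D z)"
    using integrable_even_part_on[of "{z. \<bar>z\<bar> \<le> 1}"] integrable_even_part_on[of "{z. \<alpha> < \<bar>z\<bar> \<and> \<bar>z\<bar> \<le> 1}"]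
    by (subst Bochner_Integration.integral_diff)
      (auto simp: principal_value_integral_def truncated_integral_eq_even_part[OF assms(1)])
  finally show ?thesis
    using small_jump_even_part_bound[OF assms(2)] by (simp add: abs_minus_commute)
qed

end

section \<open>Convergence of the truncated integrals\<close>

lemma borel_measurable_principal_value_integral:
  assumes L: "sym_levy_measure \<nu>" and f: "(\<lambda>(\<omega>, z). f \<omega> z) \<in> borel_measurable (M \<Otimes>\<^sub>M \<nu>)"
  shows "(\<lambda>\<omega>. principal_value_integral \<nu> (f \<omega>)) \<in> borel_measurable M"
proof -
  interpret sigma_finite_measure \<nu> by (rule sigma_finite_sym_levy_measure[OF L])
  have [measurable]: "(\<lambda>p. f (fst p) (snd p)) \<in> borel_measurable (M \<Otimes>\<^sub>M \<nu>)"
    using f by (simp add: case_prod_beta')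
  note [measurable] = reflect_measurable_pair[OF L f]
  have [measurable]: "(\<lambda>p. indicator {z. \<bar>z\<bar> \<le> 1} (snd p) :: real) \<in> borel_measurable (M \<Otimes>\<^sub>M \<nu>)"
    by (rule measurable_compose[OF measurable_snd]) (simp add: sym_levy_measure_measurable[OF L])
  have "(\<lambda>(\<omega>, z). indicator {z. \<bar>z\<bar> \<le> 1} z * even_part (f \<omega>) z) \<in> borel_measurable (M \<Otimes>\<^sub>M \<nu>)"
    unfolding even_part_def case_prod_beta' by measurable
  from borel_measurable_lebesgue_integral[OF this] show ?thesis
    unfolding principal_value_integral_def .
qed

lemma truncated_integral_approx_AE:
  fixes g d :: "'a \<Rightarrow> real \<Rightarrow> real"
  assumes L: "sym_levy_measure \<nu>"
    and g: "(\<lambda>(\<omega>, z). g \<omega> z) \<in> borel_measurable (M \<Otimes>\<^sub>M \<nu>)"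
    and d: "(\<lambda>(\<omega>, z). d \<omega> z) \<in> borel_measurable (M \<Otimes>\<^sub>M \<nu>)"
    and d_regular: "AE \<omega> in M. AE z in \<nu>. \<bar>d \<omega> z\<bar> \<le> K0 \<and> \<bar>d \<omega> (- z) - d \<omega> z\<bar> \<le> K1 * \<bar>z\<bar>"
    and g_bound: "\<forall>\<omega>\<in>space M. \<forall>z. \<bar>z\<bar> \<le> 1 \<longrightarrow> \<bar>g \<omega> z\<bar> \<le> C \<omega> * \<bar>z\<bar>"
    and g_even_bound: "\<forall>\<omega>\<in>space M. \<forall>z. \<bar>z\<bar> \<le> 1 \<longrightarrow> \<bar>g \<omega> z + g \<omega> (- z)\<bar> \<le> C \<omega> * z\<^sup>2"
  shows "AE \<omega> in M. \<forall>\<alpha>. 0 < \<alpha> \<and> \<alpha> \<le> 1 \<longrightarrow>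
    \<bar>(LINT z:{z. \<alpha> < \<bar>z\<bar> \<and> \<bar>z\<bar> \<le> 1}|\<nu>. g \<omega> z * d \<omega> z) - principal_value_integral \<nu> (\<lambda>z. g \<omega> z * d \<omega> z)\<bar>
      \<le> C \<omega> * ((\<bar>K0\<bar> + \<bar>K1\<bar>) * small_jump_moment \<nu> \<alpha>)"
  using d_regular
proof (rule AE_mp, intro AE_I2 impI allI)
  fix \<omega> and \<alpha> :: real assume \<omega>: "\<omega> \<in> space M" and "AE z in \<nu>. \<bar>d \<omega> z\<bar> \<le> K0 \<and> \<bar>d \<omega> (- z) - d \<omega> z\<bar> \<le> K1 * \<bar>z\<bar>"
  moreover have "g \<omega> \<in> borel_measurable borel" "d \<omega> \<in> borel_measurable borel"
    using measurable_Pair2[OF g \<omega>] measurable_Pair2[OF d \<omega>] by (simp_all add: sym_levy_measure_measurable[OF L])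
  ultimately interpret small_jump_integrand \<nu> "g \<omega>" "d \<omega>" "C \<omega>" K0 K1
    using L g_bound g_even_bound \<omega> by unfold_locales auto
  assume "0 < \<alpha> \<and> \<alpha> \<le> 1"
  then show "\<bar>(LINT z:{z. \<alpha> < \<bar>z\<bar> \<and> \<bar>z\<bar> \<le> 1}|\<nu>. g \<omega> z * d \<omega> z) - principal_value_integral \<nu> (\<lambda>z. g \<omega> z * d \<omega> z)\<bar>
      \<le> C \<omega> * ((\<bar>K0\<bar> + \<bar>K1\<bar>) * small_jump_moment \<nu> \<alpha>)"
    using truncated_integral_approx[of \<alpha>] by (simp add: mult.assoc)
qed

lemma power2_le_of_abs_le: "\<bar>x\<bar> \<le> y \<Longrightarrow> x\<^sup>2 \<le> (y::real)\<^sup>2"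
  by (metis abs_ge_zero order_trans power2_le_iff_abs_le)

lemma mult_le_abs_bound_mult: "\<bar>c\<bar> \<le> B \<Longrightarrow> c * x \<le> \<bar>B\<bar> * \<bar>x::real\<bar>"
  by (metis abs_ge_self abs_ge_zero abs_mult abs_of_nonneg mult_right_mono order_trans)

lemma integrable_square_of_AE_abs_le:
  fixes f :: "'a \<Rightarrow> real"
  assumes "f \<in> borel_measurable M" "integrable M (\<lambda>\<omega>. (C \<omega>)\<^sup>2)" "AE \<omega> in M. \<bar>f \<omega>\<bar> \<le> C \<omega> * a"
  shows "integrable M (\<lambda>\<omega>. (f \<omega>)\<^sup>2)"
proof (rule Bochner_Integration.integrable_bound)
  show "integrable M (\<lambda>\<omega>. a\<^sup>2 * (C \<omega>)\<^sup>2)" using assms(2) by simp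
  show "AE \<omega> in M. norm ((f \<omega>)\<^sup>2) \<le> norm (a\<^sup>2 * (C \<omega>)\<^sup>2)"
    using assms(3)
  proof eventually_elim
    case (elim \<omega>)
    from power2_le_of_abs_le[OF elim] show ?case by (simp add: power_mult_distrib mult.commute)
  qed
qed (use assms(1) in measurable)

lemma tendsto_mean_square_of_AE_bound:
  fixes X :: "'b \<Rightarrow> 'a \<Rightarrow> real"
  assumes C: "integrable M (\<lambda>\<omega>. (C \<omega>)\<^sup>2)" and r: "(r \<longlongrightarrow> 0) F"
    and bound: "\<forall>\<^sub>F \<alpha> in F. AE \<omega> in M. \<bar>X \<alpha> \<omega> - Y \<omega>\<bar> \<le> C \<omega> * r \<alpha>"
  shows "((\<lambda>\<alpha>. \<integral>\<omega>. (X \<alpha> \<omega> - Y \<omega>)\<^sup>2 \<partial>M) \<longlongrightarrow> 0) F"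
proof (rule Lim_null_comparison)
  show "((\<lambda>\<alpha>. (r \<alpha>)\<^sup>2 * (\<integral>\<omega>. (C \<omega>)\<^sup>2 \<partial>M)) \<longlongrightarrow> 0) F"
    using tendsto_mult_right[OF tendsto_power[OF r, of 2], of "\<integral>\<omega>. (C \<omega>)\<^sup>2 \<partial>M"] by simp
  show "\<forall>\<^sub>F \<alpha> in F. norm (\<integral>\<omega>. (X \<alpha> \<omega> - Y \<omega>)\<^sup>2 \<partial>M) \<le> (r \<alpha>)\<^sup>2 * (\<integral>\<omega>. (C \<omega>)\<^sup>2 \<partial>M)"
    using bound
  proof eventually_elim
    case (elim \<alpha>)
    have "(\<integral>\<omega>. (X \<alpha> \<omega> - Y \<omega>)\<^sup>2 \<partial>M) \<le> (\<integral>\<omega>. (r \<alpha>)\<^sup>2 * (C \<omega>)\<^sup>2 \<partial>M)"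
    proof (rule integral_mono_AE')
      show "integrable M (\<lambda>\<omega>. (r \<alpha>)\<^sup>2 * (C \<omega>)\<^sup>2)" using C by simp
      show "AE \<omega> in M. (X \<alpha> \<omega> - Y \<omega>)\<^sup>2 \<le> (r \<alpha>)\<^sup>2 * (C \<omega>)\<^sup>2"
        using elim
      proof eventually_elim
        case (elim \<omega>)
        from power2_le_of_abs_le[OF elim] show ?case by (simp add: power_mult_distrib mult.commute)
      qed
    qed simp
    then show ?case by simp
  qed
qed

lemma AE_uniform_tendsto_of_AE_bound:
  fixes X :: "'b \<Rightarrow> 'a \<Rightarrow> real"
  assumes C: "AE \<omega> in M. \<bar>C \<omega>\<bar> \<le> B" and r: "(r \<longlongrightarrow> 0) F"
    and bound: "\<forall>\<^sub>F \<alpha> in F. AE \<omega> in M. \<bar>X \<alpha> \<omega> - Y \<omega>\<bar> \<le> C \<omega> * r \<alpha>"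
  shows "\<forall>\<epsilon>>0. \<forall>\<^sub>F \<alpha> in F. AE \<omega> in M. \<bar>X \<alpha> \<omega> - Y \<omega>\<bar> \<le> \<epsilon>"
proof (intro allI impI)
  fix \<epsilon> :: real assume "0 < \<epsilon>"
  moreover have "((\<lambda>\<alpha>. \<bar>B\<bar> * \<bar>r \<alpha>\<bar>) \<longlongrightarrow> \<bar>B\<bar> * \<bar>0\<bar>) F" by (intro tendsto_intros r)
  ultimately have "\<forall>\<^sub>F \<alpha> in F. \<bar>B\<bar> * \<bar>r \<alpha>\<bar> < \<epsilon>" by (simp add: order_tendstoD(2))
  with bound show "\<forall>\<^sub>F \<alpha> in F. AE \<omega> in M. \<bar>X \<alpha> \<omega> - Y \<omega>\<bar> \<le> \<epsilon>"
  proof eventually_elim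
    case (elim \<alpha>)
    from elim(1) C show ?case
    proof eventually_elim
      case (elim \<omega>)
      then show ?case using mult_le_abs_bound_mult[OF elim(2), of "r \<alpha>"] \<open>\<bar>B\<bar> * \<bar>r \<alpha>\<bar> < \<epsilon>\<close> by linarith
    qed
  qed
qed

lemma principal_value_approximation:
  fixes g d :: "'a \<Rightarrow> real \<Rightarrow> real"
  assumes L: "sym_levy_measure \<nu>"
    and g: "(\<lambda>(\<omega>, z). g \<omega> z) \<in> borel_measurable (M \<Otimes>\<^sub>M \<nu>)"
    and d: "(\<lambda>(\<omega>, z). d \<omega> z) \<in> borel_measurable (M \<Otimes>\<^sub>M \<nu>)"
    and d_regular: "AE \<omega> in M. AE z in \<nu>. \<bar>d \<omega> z\<bar> \<le> K0 \<and> \<bar>d \<omega> (- z) - d \<omega> z\<bar> \<le> K1 * \<bar>z\<bar>"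
    and g_bound: "\<forall>\<omega>\<in>space M. \<forall>z. \<bar>z\<bar> \<le> 1 \<longrightarrow> \<bar>g \<omega> z\<bar> \<le> C \<omega> * \<bar>z\<bar>"
    and g_even_bound: "\<forall>\<omega>\<in>space M. \<forall>z. \<bar>z\<bar> \<le> 1 \<longrightarrow> \<bar>g \<omega> z + g \<omega> (- z)\<bar> \<le> C \<omega> * z\<^sup>2"
  shows "\<forall>\<^sub>F \<alpha> in at_right 0. AE \<omega> in M.
      \<bar>(LINT z:{z. \<alpha> < \<bar>z\<bar> \<and> \<bar>z\<bar> \<le> 1}|\<nu>. g \<omega> z * d \<omega> z) - principal_value_integral \<nu> (\<lambda>z. g \<omega> z * d \<omega> z)\<bar>
        \<le> C \<omega> * ((\<bar>K0\<bar> + \<bar>K1\<bar>) * small_jump_moment \<nu> \<alpha>)"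
    and "AE \<omega> in M. \<bar>principal_value_integral \<nu> (\<lambda>z. g \<omega> z * d \<omega> z)\<bar>
        \<le> C \<omega> * ((\<bar>K0\<bar> + \<bar>K1\<bar>) * small_jump_moment \<nu> 1)"
proof -
  note approx = truncated_integral_approx_AE[OF L g d d_regular g_bound g_even_bound]
  have "\<forall>\<^sub>F \<alpha> in at_right (0::real). 0 < \<alpha> \<and> \<alpha> \<le> 1"
    unfolding eventually_at_right_field by (rule exI[of _ 1]) auto
  then show "\<forall>\<^sub>F \<alpha> in at_right 0. AE \<omega> in M.
      \<bar>(LINT z:{z. \<alpha> < \<bar>z\<bar> \<and> \<bar>z\<bar> \<le> 1}|\<nu>. g \<omega> z * d \<omega> z) - principal_value_integral \<nu> (\<lambda>z. g \<omega> z * d \<omega> z)\<bar>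
        \<le> C \<omega> * ((\<bar>K0\<bar> + \<bar>K1\<bar>) * small_jump_moment \<nu> \<alpha>)"
    by eventually_elim (use approx in \<open>auto elim: AE_mp\<close>)
  show "AE \<omega> in M. \<bar>principal_value_integral \<nu> (\<lambda>z. g \<omega> z * d \<omega> z)\<bar>
      \<le> C \<omega> * ((\<bar>K0\<bar> + \<bar>K1\<bar>) * small_jump_moment \<nu> 1)"
    using approx
  proof eventually_elim
    case (elim \<omega>)
    have "{z::real. 1 < \<bar>z\<bar> \<and> \<bar>z\<bar> \<le> 1} = {}" by auto
    then have "(LINT z:{z. 1 < \<bar>z\<bar> \<and> \<bar>z\<bar> \<le> 1}|\<nu>. g \<omega> z * d \<omega> z) = 0"
      by (simp only:) (simp add: set_lebesgue_integral_def)
    then show ?case using elim[rule_format, of 1] by simp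
  qed
qed

theorem mainTheorem15:
  fixes M :: "'a measure" and \<tau> :: "real \<Rightarrow> 'a \<Rightarrow> 'a" and \<nu> :: "real measure"
    and c :: "'a \<Rightarrow> real \<Rightarrow> real" and Ck :: "nat \<Rightarrow> real" and k :: nat
    and g :: "'a \<Rightarrow> real \<Rightarrow> real" and dc :: "'a \<Rightarrow> real \<Rightarrow> real"
  assumes "prob_space M"
    and "ergodic_flow M \<tau>"
    and "sym_levy_measure \<nu>"
    and c_meas: "(\<lambda>(\<omega>, z). c \<omega> z) \<in> borel_measurable (M \<Otimes>\<^sub>M \<nu>)"
    and c_nonneg: "\<forall>\<omega>\<in>space M. \<forall>z. 0 \<le> c \<omega> z"
    and c_bdd: "\<exists>B. \<forall>\<omega>\<in>space M. \<forall>z. \<bar>c \<omega> z\<bar> \<le> B"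
    and c_sym: "AE z in \<nu>. AE \<omega> in M. c (\<tau> z \<omega>) (- z) = c \<omega> z"
    and c_smooth: "AE z in \<nu>. \<forall>j. \<exists>h. is_Dpow M \<tau> j (\<lambda>\<omega>. c \<omega> z) h \<and>
                      (AE \<omega> in M. \<bar>h \<omega>\<bar> \<le> Ck j)"
    and dc_meas: "(\<lambda>(\<omega>, z). dc \<omega> z) \<in> borel_measurable (M \<Otimes>\<^sub>M \<nu>)"
    and dc_version: "AE z in \<nu>. is_Dpow M \<tau> k (\<lambda>\<omega>. c \<omega> z) (\<lambda>\<omega>. dc \<omega> z)"
    and g_meas: "(\<lambda>(\<omega>, z). g \<omega> z) \<in> borel_measurable (M \<Otimes>\<^sub>M \<nu>)"
  shows
   "(\<forall>C. C \<in> borel_measurable M \<and> integrable M (\<lambda>\<omega>. (C \<omega>)\<^sup>2) \<and>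
        (\<forall>\<omega>\<in>space M. \<forall>z. \<bar>z\<bar> \<le> 1 \<longrightarrow> \<bar>g \<omega> z\<bar> \<le> C \<omega> * \<bar>z\<bar>) \<and>
        (\<forall>\<omega>\<in>space M. \<forall>z. \<bar>z\<bar> \<le> 1 \<longrightarrow> \<bar>g \<omega> z + g \<omega> (- z)\<bar> \<le> C \<omega> * z\<^sup>2)
      \<longrightarrow> (\<exists>F. F \<in> borel_measurable M \<and> integrable M (\<lambda>\<omega>. (F \<omega>)\<^sup>2) \<and>
            ((\<lambda>\<alpha>. \<integral>\<omega>. ((LINT z:{z. \<alpha> < \<bar>z\<bar> \<and> \<bar>z\<bar> \<le> 1}|\<nu>. g \<omega> z * dc \<omega> z) - F \<omega>)\<^sup>2 \<partial>M)
               \<longlongrightarrow> 0) (at_right 0)))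
    \<and>
    (\<forall>C. C \<in> borel_measurable M \<and> (\<exists>B. AE \<omega> in M. \<bar>C \<omega>\<bar> \<le> B) \<and>
        (\<forall>\<omega>\<in>space M. \<forall>z. \<bar>z\<bar> \<le> 1 \<longrightarrow> \<bar>g \<omega> z\<bar> \<le> C \<omega> * \<bar>z\<bar>) \<and>
        (\<forall>\<omega>\<in>space M. \<forall>z. \<bar>z\<bar> \<le> 1 \<longrightarrow> \<bar>g \<omega> z + g \<omega> (- z)\<bar> \<le> C \<omega> * z\<^sup>2)
      \<longrightarrow> (\<exists>F. F \<in> borel_measurable M \<and> (\<exists>B. AE \<omega> in M. \<bar>F \<omega>\<bar> \<le> B) \<and>
            (\<forall>\<epsilon>>0. \<forall>\<^sub>F \<alpha> in at_right 0.
               AE \<omega> in M. \<bar>(LINT z:{z. \<alpha> < \<bar>z\<bar> \<and> \<bar>z\<bar> \<le> 1}|\<nu>. g \<omega> z * dc \<omega> z) - F \<omega>\<bar> \<le> \<epsilon>)))"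
proof -
  note P = assms(1) and fl = assms(2) and L = assms(3)
  define F where "F \<omega> = principal_value_integral \<nu> (\<lambda>z. g \<omega> z * dc \<omega> z)" for \<omega>
  define r where "r \<alpha> = (\<bar>Ck k\<bar> + \<bar>Ck (Suc k)\<bar>) * small_jump_moment \<nu> \<alpha>" for \<alpha>
  have "(\<lambda>(\<omega>, z). g \<omega> z * dc \<omega> z) \<in> borel_measurable (M \<Otimes>\<^sub>M \<nu>)"
    using borel_measurable_times[OF g_meas dc_meas] by (simp add: case_prod_beta')
  then have F: "F \<in> borel_measurable M"
    unfolding F_def by (rule borel_measurable_principal_value_integral[OF L])
  have r: "(r \<longlongrightarrow> 0) (at_right 0)"
    using tendsto_mult_left[OF small_jump_moment_tendsto_0[OF L]] unfolding r_def by simp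
  note approx = principal_value_approximation[OF L g_meas dc_meas
      Dpow_version_regular_AE[OF P fl L c_sym c_smooth dc_meas dc_version], folded F_def r_def]
  show ?thesis
    apply (intro conjI allI impI; elim conjE)
    subgoal premises prems for C
      using F integrable_square_of_AE_abs_le[OF F prems(2) approx(2)[OF prems(3,4)]]
        tendsto_mean_square_of_AE_bound[OF prems(2) r approx(1)[OF prems(3,4)]] by blast
    subgoal premises prems for C
    proof -
      obtain B where B: "AE \<omega> in M. \<bar>C \<omega>\<bar> \<le> B" using prems(2) by blast
      from approx(2)[OF prems(3,4)] B have "AE \<omega> in M. \<bar>F \<omega>\<bar> \<le> \<bar>B\<bar> * \<bar>r 1\<bar>"
        by eventually_elim (use mult_le_abs_bound_mult in \<open>blast intro: order_trans\<close>)
      then show ?thesis using F AE_uniform_tendsto_of_AE_bound[OF B r approx(1)[OF prems(3,4)]] by blast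
    qed
    done
qed

end
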